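(* Let $(X,d)$ be a geodesic metric space and $\epsilon\ge 0$ such that for all $x,y\in X$, $s,t\ge 0$, the set $B(x,s)\cap B(y,t)$ has eccentricity at most $\epsilon$. Then for every $q\ge 0$, all $x,y\in X$, every $q$-path $\mu$ from $x$ to $y$ and every geodesic $\gamma$ from $x$ to $y$, each point of $\mu$ lies within distance $2q+2\epsilon$ of some point of $\gamma$.
   Context: $B(x,r)=\{z\in X: d(x,z)\le r\}$ denotes the closed ball. A set $S\subseteq X$ has eccentricity at most $\delta$ if $S=\emptyset$ or there exist $R\ge 0$ and $c,c'\in X$ with $B(c,R)\subseteq S\subseteq B(c',R+\delta)$. For $q\ge0$, a $q$-path from $x$ to $y$ is a continuous path $\mu$ from $x$ to $y$ such that every point $z$ on $\mu$ satisfies $d(x,z)+d(z,y)\le d(x,y)+q$. *)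

theory Defs
  imports "HOL-Analysis.Analysis"
begin

text \<open>The metric space X is the whole type 'a (class metric_space); closed balls are cball.\<close>

definition eccentricity_le :: "'a::metric_space set \<Rightarrow> real \<Rightarrow> bool" where
  "eccentricity_le S \<delta> \<longleftrightarrow> S = {} \<or>
     (\<exists>R c c'. R \<ge> 0 \<and> cball c R \<subseteq> S \<and> S \<subseteq> cball c' (R + \<delta>))"

definition geodesic :: "(real \<Rightarrow> 'a::metric_space) \<Rightarrow> 'a \<Rightarrow> 'a \<Rightarrow> bool" where
  "geodesic \<gamma> x y \<longleftrightarrow> \<gamma> 0 = x \<and> \<gamma> (dist x y) = y \<and>
     (\<forall>s\<in>{0..dist x y}. \<forall>t\<in>{0..dist x y}. dist (\<gamma> s) (\<gamma> t) = \<bar>s - t\<bar>)"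

definition geodesic_space :: "'a::metric_space itself \<Rightarrow> bool" where
  "geodesic_space _ \<longleftrightarrow> (\<forall>x y::'a. \<exists>\<gamma>. geodesic \<gamma> x y)"

definition q_path :: "real \<Rightarrow> (real \<Rightarrow> 'a::metric_space) \<Rightarrow> 'a \<Rightarrow> 'a \<Rightarrow> bool" where
  "q_path q \<mu> x y \<longleftrightarrow> path \<mu> \<and> pathstart \<mu> = x \<and> pathfinish \<mu> = y \<and>
     (\<forall>z\<in>path_image \<mu>. dist x z + dist z y \<le> dist x y + q)"

end

theory Submission
  imports Defs
begin

text \<open>Let z satisfy d(x,z) + d(z,y) \<le> d(x,y) + q and put a = d(x,z), b = d(z,y). The lens
  B(x,a) \<inter> B(y,b) contains z and a point of \<gamma>. If a ball B(c,R) fits inside the lens, walking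
  from c towards x (or y) along a geodesic shows that R or d(c,x) (resp. d(c,y)) is at most the
  excess a + b - d(x,y) \<le> q; as d(c,x) + d(c,y) \<ge> d(x,y), either R \<le> q or d(x,y) \<le> 2q.
  In the first case the eccentricity bound puts the lens inside a ball of radius q + \<epsilon>, so z is
  within 2q + 2\<epsilon> of that point of \<gamma>; in the second, z is within 3q/2 of x or y.\<close>

lemma geodesic_dist_start:
  assumes "geodesic \<gamma> x y" "r \<in> {0..dist x y}"
  shows "dist x (\<gamma> r) = r"
  using assms unfolding geodesic_def
  by (metis atLeastAtMost_iff diff_0 abs_minus_cancel abs_of_nonneg order_refl zero_le_dist)

lemma geodesic_dist_finish:
  assumes "geodesic \<gamma> x y" "r \<in> {0..dist x y}"
  shows "dist (\<gamma> r) y = dist x y - r"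
proof -
  have "dist (\<gamma> r) (\<gamma> (dist x y)) = \<bar>r - dist x y\<bar>"
    using assms unfolding geodesic_def by (meson atLeastAtMost_iff order_refl zero_le_dist)
  moreover have "\<gamma> (dist x y) = y"
    using assms(1) unfolding geodesic_def by blast
  ultimately show ?thesis
    using assms(2) by auto
qed

lemma geodesic_mem_cball_Int_cball:
  assumes "geodesic \<gamma> x y" "s \<ge> 0" "t \<ge> 0" "dist x y \<le> s + t"
  shows "\<gamma> (min s (dist x y)) \<in> cball x s \<inter> cball y t"
proof -
  let ?r = "min s (dist x y)"
  have r: "?r \<in> {0..dist x y}"
    using assms(2) by simp
  show ?thesis
    using geodesic_dist_start[OF assms(1) r] geodesic_dist_finish[OF assms(1) r] assms(2-4)
    by (auto simp: dist_commute min_def)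
qed

lemma cball_subset_cball_Int_cball_min_dist_le:
  fixes c x y :: "'a::metric_space"
  assumes "geodesic_space TYPE('a)" "R \<ge> 0"
    and sub: "cball c R \<subseteq> cball x s \<inter> cball y t"
  shows "min R (dist c x) \<le> s + t - dist x y"
proof -
  obtain g where g: "geodesic g c x"
    using assms(1) unfolding geodesic_space_def by blast
  define r where "r = min R (dist c x)"
  have r: "r \<in> {0..dist c x}"
    using assms(2) by (simp add: r_def)
  have "g r \<in> cball c R"
    using geodesic_dist_start[OF g r] by (simp add: r_def)
  then have "dist y (g r) \<le> t"
    using sub by auto
  moreover have "c \<in> cball x s"
    using sub assms(2) centre_in_cball by blast
  moreover have "dist x y \<le> dist x (g r) + dist (g r) y"
    by (rule dist_triangle)
  ultimately show ?thesis
    using geodesic_dist_finish[OF g r] by (simp add: r_def[symmetric] dist_commute)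
qed

lemma cball_subset_cball_Int_cball_radius_le:
  fixes c x y :: "'a::metric_space"
  assumes "geodesic_space TYPE('a)" "R \<ge> 0"
    and sub: "cball c R \<subseteq> cball x s \<inter> cball y t"
  shows "min R (dist x y / 2) \<le> s + t - dist x y"
proof -
  have "min R (dist c x) \<le> s + t - dist x y"
    using cball_subset_cball_Int_cball_min_dist_le[OF assms] .
  moreover have "min R (dist c y) \<le> s + t - dist x y"
    using cball_subset_cball_Int_cball_min_dist_le[OF assms(1,2), of c y t x s] sub
    by (auto simp: dist_commute)
  moreover have "dist x y \<le> dist c x + dist c y"
    by (metis dist_commute dist_triangle)
  ultimately show ?thesis
    by linarith
qed

lemma near_geodesic_if_dist_excess_le:
  fixes x y z :: "'a::metric_space"
  assumes gs: "geodesic_space TYPE('a)" and "\<epsilon> \<ge> 0"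
    and ecc: "\<And>(x::'a) y s t. s \<ge> 0 \<Longrightarrow> t \<ge> 0 \<Longrightarrow> eccentricity_le (cball x s \<inter> cball y t) \<epsilon>"
    and g: "geodesic \<gamma> x y"
    and excess: "dist x z + dist z y \<le> dist x y + q"
  shows "\<exists>w\<in>\<gamma> ` {0..dist x y}. dist z w \<le> 2*q + 2*\<epsilon>"
proof (cases "dist x y \<le> 2*q")
  case True
  have "x \<in> \<gamma> ` {0..dist x y}" "y \<in> \<gamma> ` {0..dist x y}"
    using g unfolding geodesic_def by (metis atLeastAtMost_iff image_eqI order_refl zero_le_dist)+
  moreover have "min (dist z x) (dist z y) \<le> 2*q + 2*\<epsilon>"
  proof -
    have "2 * min (dist z x) (dist z y) \<le> dist x z + dist z y"
      by (simp add: dist_commute min_def)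
    then show ?thesis
      using True excess \<open>\<epsilon> \<ge> 0\<close> zero_le_dist[of x y] by linarith
  qed
  ultimately show ?thesis
    by (metis min_def)
next
  case False
  let ?S = "cball x (dist x z) \<inter> cball y (dist z y)"
  have z: "z \<in> ?S"
    by (simp add: dist_commute)
  obtain R c c' where "R \<ge> 0" and inner: "cball c R \<subseteq> ?S" and outer: "?S \<subseteq> cball c' (R + \<epsilon>)"
    using ecc[of "dist x z" "dist z y" x y] z unfolding eccentricity_le_def by auto
  have "R \<le> q"
    using cball_subset_cball_Int_cball_radius_le[OF gs \<open>R \<ge> 0\<close> inner] False excess by linarith
  define r where "r = min (dist x z) (dist x y)"
  have p: "\<gamma> r \<in> ?S"
    unfolding r_def by (rule geodesic_mem_cball_Int_cball[OF g]) (auto intro: dist_triangle)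
  have "dist z (\<gamma> r) \<le> dist c' z + dist c' (\<gamma> r)"
    by (rule dist_triangle3)
  also have "\<dots> \<le> 2*q + 2*\<epsilon>"
  proof -
    have "dist c' z \<le> R + \<epsilon>" "dist c' (\<gamma> r) \<le> R + \<epsilon>"
      using outer z p by (auto simp del: Int_iff)
    then show ?thesis
      using \<open>R \<le> q\<close> by linarith
  qed
  finally show ?thesis
    by (auto simp: r_def)
qed

theorem lemma3p3:
  fixes \<epsilon> :: real
  assumes "geodesic_space TYPE('a::metric_space)"
    and "\<epsilon> \<ge> 0"
    and "\<And>(x::'a) y s t. s \<ge> 0 \<Longrightarrow> t \<ge> 0 \<Longrightarrow> eccentricity_le (cball x s \<inter> cball y t) \<epsilon>"
  shows "\<forall>q \<ge> 0. \<forall>(x::'a) y \<mu> \<gamma>. q_path q \<mu> x y \<longrightarrow> geodesic \<gamma> x y \<longrightarrow>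
           (\<forall>z\<in>path_image \<mu>. \<exists>w\<in>\<gamma> ` {0..dist x y}. dist z w \<le> 2*q + 2*\<epsilon>)"
  using near_geodesic_if_dist_excess_le[OF assms] unfolding q_path_def by blast

end
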